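(* Let $0<q<1/2$ and $p=1-q$. Let $T_1,T_2,\dots$ be i.i.d. exponential random variables with rate $\alpha>0$, $S_n=T_1+\dots+T_n$, and let $(N'(t))_{t\ge0}$ be a Poisson process with rate $\alpha'>0$ independent of the $T_i$, with $\alpha/(\alpha+\alpha')=p$, $\alpha'/(\alpha+\alpha')=q$. For an integer $z\ge 1$ define $$P(z)=\mathbb P[N'(S_z)\ge z]+\sum_{k=0}^{z-1}\mathbb P[N'(S_z)=k]\left(\frac qp\right)^{z-k}.$$ Then $$P(z)=1-\sum_{k=0}^{z-1}\left(p^zq^k-q^zp^k\right)\binom{k+z-1}{k}.$$
   Context: $P(z)$ is the probability of success of a double-spend attack by attackers with relative hash power $q$ after the honest miners (relative hash power $p$) have mined $z$ blocks: $S_z$ is the time of the $z$-th honest block, $N'(t)$ is the number of attacker blocks by time $t$, and $(q/p)^m$ is the probability that attackers lagging $m$ blocks behind ever catch up. *)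

theory Defs
  imports "HOL-Probability.Probability"
begin

text \<open>Paths: N 0 = 0, nondecreasing, right-continuous (counting process; hence N t = 0 for t \<le> 0).\<close>

definition poisson_process :: "'a measure \<Rightarrow> real \<Rightarrow> (real \<Rightarrow> 'a \<Rightarrow> nat) \<Rightarrow> bool" where
  "poisson_process M r N \<longleftrightarrow>
     (\<forall>t. N t \<in> measurable M (count_space UNIV)) \<and>
     (\<forall>\<omega>\<in>space M. N 0 \<omega> = 0 \<and> mono (\<lambda>t. N t \<omega>) \<and>
         (\<forall>t. continuous (at_right t) (\<lambda>s. real (N s \<omega>)))) \<and>
     (\<forall>n (t :: nat \<Rightarrow> real). 0 \<le> t 0 \<and> (\<forall>i<n. t i \<le> t (Suc i)) \<longrightarrow>
         prob_space.indep_vars M (\<lambda>_. count_space UNIV)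
           (\<lambda>i \<omega>. N (t (Suc i)) \<omega> - N (t i) \<omega>) {..<n}) \<and>
     (\<forall>s t k. 0 \<le> s \<and> s \<le> t \<longrightarrow>
         measure M {\<omega>\<in>space M. N t \<omega> - N s \<omega> = k}
           = exp (- r * (t - s)) * (r * (t - s)) ^ k / fact k)"

text \<open>Success probability P(z) of the double-spend attack; T i is T_(i+1) of the paper,
  so S_z = T 0 + ... + T (z-1).\<close>

definition attack_prob ::
  "'a measure \<Rightarrow> (nat \<Rightarrow> 'a \<Rightarrow> real) \<Rightarrow> (real \<Rightarrow> 'a \<Rightarrow> nat) \<Rightarrow> real \<Rightarrow> real \<Rightarrow> nat \<Rightarrow> real" where
  "attack_prob M T N p q z =
     measure M {\<omega>\<in>space M. N (\<Sum>i<z. T i \<omega>) \<omega> \<ge> z}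
     + (\<Sum>k<z. measure M {\<omega>\<in>space M. N (\<Sum>i<z. T i \<omega>) \<omega> = k} * (q / p) ^ (z - k))"

end

theory Submission
  imports Defs
begin

text \<open>Given the time \<open>S\<^sub>z\<close>, the count \<open>N'(S\<^sub>z)\<close> is Poisson with mean \<open>\<alpha>' S\<^sub>z\<close>
  by independence, and \<open>S\<^sub>z\<close> is Erlang distributed; averaging the Poisson weights against the
  Erlang density gives the negative binomial law
  \<open>\<P>[N'(S\<^sub>z) = k] = (k+z-1 choose k) p\<^sup>z q\<^sup>k\<close>. Then \<open>p\<^sup>z q\<^sup>k (q/p)\<^bsup>z-k\<^esup> = q\<^sup>z p\<^sup>k\<close> turns
  \<open>P(z)\<close> into the stated sum.
  Evaluating a path at a random real time is not measurable for the product \<open>\<sigma>\<close>-algebra on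
  paths, so the conditioning is done at the dyadic upper approximations of \<open>S\<^sub>z\<close>, which take
  countably many values; by right continuity the integer-valued path is eventually constant
  along them.\<close>

definition dyadic_ceiling :: "nat \<Rightarrow> real \<Rightarrow> real" where
  "dyadic_ceiling n s = real (nat \<lceil>2^n * s\<rceil>) / 2^n"

lemma dyadic_ceiling_nonneg: "0 \<le> dyadic_ceiling n s"
  by (simp add: dyadic_ceiling_def)

lemma dyadic_ceiling_nonpos: "s \<le> 0 \<Longrightarrow> dyadic_ceiling n s = 0"
  by (simp add: dyadic_ceiling_def mult_nonneg_nonpos)

lemma dyadic_ceiling_ge: "s \<le> dyadic_ceiling n s"
proof -
  have "2^n * s \<le> max 0 (of_int \<lceil>2^n * s\<rceil>)" by linarith
  then show ?thesis by (simp add: dyadic_ceiling_def field_simps max_def split: if_splits)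
qed

lemma dyadic_ceiling_less:
  assumes "0 \<le> s" shows "dyadic_ceiling n s < s + (1/2)^n"
proof -
  have "of_int \<lceil>2^n * s\<rceil> < 2^n * s + 1" by linarith
  then show ?thesis using assms by (simp add: dyadic_ceiling_def field_simps power_divide)
qed

lemma borel_measurable_dyadic_ceiling [measurable]: "dyadic_ceiling n \<in> borel_measurable borel"
  unfolding dyadic_ceiling_def by measurable

lemma LIMSEQ_dyadic_ceiling:
  assumes "0 \<le> s" shows "(\<lambda>n. dyadic_ceiling n s) \<longlonglongrightarrow> s"
proof (rule tendsto_sandwich[of "\<lambda>_. s" _ _ "\<lambda>n. s + (1/2)^n"])
  show "(\<lambda>n. s + (1/2)^n) \<longlonglongrightarrow> s"
    using tendsto_add[OF tendsto_const LIMSEQ_power_zero[of "1/2::real"]] by simp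
qed (auto simp: dyadic_ceiling_ge less_imp_le[OF dyadic_ceiling_less[OF assms]])

lemma right_continuous_nat_valued_locally_const:
  fixes f :: "real \<Rightarrow> nat"
  assumes "continuous (at_right s) (\<lambda>t. real (f t))"
  obtains b where "s < b" "\<And>t. s \<le> t \<Longrightarrow> t < b \<Longrightarrow> f t = f s"
proof -
  have "((\<lambda>t. real (f t)) \<longlongrightarrow> real (f s)) (at_right s)"
    using assms by (simp add: continuous_within)
  then have "eventually (\<lambda>t. dist (real (f t)) (real (f s)) < 1) (at_right s)"
    by (rule tendstoD) simp
  then obtain b where b: "s < b" "\<And>t. s < t \<Longrightarrow> t < b \<Longrightarrow> \<bar>real (f t) - real (f s)\<bar> < 1"
    unfolding eventually_at_right_field dist_real_def by blast
  have "f t = f s" if "s \<le> t" "t < b" for t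
  proof (cases "s = t")
    case False
    with b(2) that have "\<bar>real (f t) - real (f s)\<bar> < 1" by simp
    then show ?thesis by linarith
  qed simp
  with b(1) show ?thesis by (rule that)
qed

lemma eventually_dyadic_ceiling_eq:
  fixes f :: "real \<Rightarrow> nat"
  assumes "continuous (at_right s) (\<lambda>t. real (f t))" "0 \<le> s"
  shows "eventually (\<lambda>n. f (dyadic_ceiling n s) = f s) sequentially"
proof -
  obtain b where b: "s < b" "\<And>t. s \<le> t \<Longrightarrow> t < b \<Longrightarrow> f t = f s"
    using right_continuous_nat_valued_locally_const[OF assms(1)] by blast
  have "eventually (\<lambda>n. dyadic_ceiling n s < b) sequentially"
    using order_tendstoD(2)[OF LIMSEQ_dyadic_ceiling[OF assms(2)] b(1)] .
  then show ?thesis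
    by eventually_elim (simp add: b(2) dyadic_ceiling_ge)
qed

lemma measurable_eval_at_dyadic_ceiling:
  "(\<lambda>x. snd x (dyadic_ceiling n (fst x)))
     \<in> measurable (borel \<Otimes>\<^sub>M PiM UNIV (\<lambda>_::real. count_space (UNIV :: 'b set))) (count_space UNIV)"
proof -
  have "(\<lambda>x. (\<lambda>j x. snd x (real j / 2^n)) (nat \<lceil>(2::real)^n * fst x\<rceil>) x)
      \<in> measurable (borel \<Otimes>\<^sub>M PiM UNIV (\<lambda>_::real. count_space (UNIV :: 'b set))) (count_space UNIV)"
    by (rule measurable_compose_countable) measurable
  then show ?thesis
    by (simp add: dyadic_ceiling_def)
qed

definition poisson_prob :: "real \<Rightarrow> real \<Rightarrow> nat \<Rightarrow> real" where
  "poisson_prob r t k = exp (- r * t) * (r * t) ^ k / fact k"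

lemma borel_measurable_poisson_prob [measurable]: "(\<lambda>t. poisson_prob r t k) \<in> borel_measurable borel"
  unfolding poisson_prob_def by measurable

lemma isCont_poisson_prob: "isCont (\<lambda>t. poisson_prob r t k) t"
  unfolding poisson_prob_def by (intro continuous_intros) simp

lemma integral_erlang_density:
  assumes "0 < l"
  shows "(LINT x|lborel. erlang_density k l x) = 1"
proof -
  interpret prob_space "density lborel (erlang_density k l)"
    using prob_space_erlang_density[OF assms] .
  have "integral\<^sup>L (density lborel (erlang_density k l)) (\<lambda>_. 1::real) = 1"
    using prob_space by (simp add: integral_const)
  then show ?thesis
    using assms by (subst (asm) integral_density) auto
qed

lemma erlang_density_mult_poisson_prob:
  assumes "0 < a" "0 < b"
  shows "erlang_density m a t * poisson_prob b t k
      = a ^ Suc m * b ^ k * fact (k + m) / (fact m * fact k * (a + b) ^ Suc (k + m))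
        * erlang_density (k + m) (a + b) t"
proof (cases "t < 0")
  case False
  define X where "X = (a + b) ^ Suc (k + m)"
  have "0 < X"
    using assms by (simp add: X_def)
  have "exp (- (a + b) * t) = exp (- a * t) * exp (- b * t)"
    by (simp add: exp_add[symmetric] algebra_simps)
  with False have "erlang_density (k + m) (a + b) t = X * t ^ (k + m) * exp (- a * t) * exp (- b * t) / fact (k + m)"
    unfolding erlang_density_def X_def by simp
  moreover from False have "erlang_density m a t * poisson_prob b t k
      = a ^ Suc m * b ^ k * t ^ (k + m) * exp (- a * t) * exp (- b * t) / (fact m * fact k)"
    unfolding erlang_density_def poisson_prob_def by (simp add: power_mult_distrib power_add)
  ultimately show ?thesis
    using \<open>0 < X\<close> by (simp add: X_def[symmetric] del: power_Suc)
qed (simp add: erlang_density_def)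

lemma integral_erlang_density_mult_poisson_prob:
  assumes "0 < a" "0 < b"
  shows "(LINT t|lborel. erlang_density m a t * poisson_prob b t k)
      = real ((k + m) choose k) * (a / (a + b)) ^ Suc m * (b / (a + b)) ^ k"
proof -
  have "(LINT t|lborel. erlang_density m a t * poisson_prob b t k)
      = a ^ Suc m * b ^ k * fact (k + m) / (fact m * fact k * (a + b) ^ Suc (k + m))"
    using assms by (simp add: erlang_density_mult_poisson_prob integral_erlang_density del: power_Suc)
  also have "\<dots> = real ((k + m) choose k) * (a / (a + b)) ^ Suc m * (b / (a + b)) ^ k"
    using power_add[of "a + b" k "Suc m"]
    by (simp add: binomial_fact power_divide field_simps del: power_Suc)
  finally show ?thesis .
qed

context prob_space
begin

lemma poisson_process_prob_eq:
  assumes "poisson_process M r N" "0 \<le> t"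
  shows "prob {\<omega> \<in> space M. N t \<omega> = k} = poisson_prob r t k"
proof -
  have "{\<omega> \<in> space M. N t \<omega> = k} = {\<omega> \<in> space M. N t \<omega> - N 0 \<omega> = k}"
    using assms(1) by (auto simp: poisson_process_def)
  with assms show ?thesis
    by (simp add: poisson_process_def poisson_prob_def)
qed

lemma poisson_prob_bounds:
  assumes "poisson_process M r N" "0 \<le> t"
  shows "0 \<le> poisson_prob r t k" "poisson_prob r t k \<le> 1"
  using poisson_process_prob_eq[OF assms, of k] by (metis measure_nonneg, metis prob_le_1)

lemma measurable_poisson_process_path:
  "poisson_process M r N \<Longrightarrow> (\<lambda>\<omega> t. N t \<omega>) \<in> measurable M (PiM UNIV (\<lambda>_. count_space UNIV))"
  unfolding poisson_process_def by (auto intro!: measurable_PiM_single' simp: space_PiM)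

lemma poisson_process_eventually_dyadic_eq:
  assumes "poisson_process M r N" "\<omega> \<in> space M"
  shows "eventually (\<lambda>n. N (dyadic_ceiling n s) \<omega> = N s \<omega>) sequentially"
proof (cases "0 \<le> s")
  case True
  with assms show ?thesis
    unfolding poisson_process_def by (auto intro: eventually_dyadic_ceiling_eq)
next
  case False
  with assms have "mono (\<lambda>t. N t \<omega>)" "N 0 \<omega> = 0"
    unfolding poisson_process_def by auto
  with False have "N s \<omega> = 0"
    using monoD[of "\<lambda>t. N t \<omega>" s 0] by simp
  with False \<open>N 0 \<omega> = 0\<close> show ?thesis by (simp add: dyadic_ceiling_nonpos)
qed

lemma measurable_poisson_process_dyadic_time:
  assumes N: "poisson_process M r N" and S: "S \<in> borel_measurable M"
  shows "(\<lambda>\<omega>. N (dyadic_ceiling n (S \<omega>)) \<omega>) \<in> measurable M (count_space UNIV)"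
proof -
  have "(\<lambda>\<omega>. nat \<lceil>2^n * S \<omega>\<rceil>) \<in> measurable M (count_space UNIV)"
    using S by measurable
  then have "(\<lambda>\<omega>. (\<lambda>j. N (real j / 2^n)) (nat \<lceil>2^n * S \<omega>\<rceil>) \<omega>) \<in> measurable M (count_space UNIV)"
    by (rule measurable_compose_countable[rotated]) (use N in \<open>simp add: poisson_process_def\<close>)
  then show ?thesis by (simp add: dyadic_ceiling_def)
qed

lemma measurable_poisson_process_random_time:
  assumes N: "poisson_process M r N" and S: "S \<in> borel_measurable M"
  shows "(\<lambda>\<omega>. N (S \<omega>) \<omega>) \<in> measurable M (count_space UNIV)"
proof -
  have "(\<lambda>\<omega>. real (N (S \<omega>) \<omega>)) \<in> borel_measurable M"
  proof (rule borel_measurable_LIMSEQ_real)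
    show "(\<lambda>\<omega>. real (N (dyadic_ceiling n (S \<omega>)) \<omega>)) \<in> borel_measurable M" for n
      using measurable_poisson_process_dyadic_time[OF N S] by measurable
    show "(\<lambda>n. real (N (dyadic_ceiling n (S \<omega>)) \<omega>)) \<longlonglongrightarrow> real (N (S \<omega>) \<omega>)"
      if "\<omega> \<in> space M" for \<omega>
      using poisson_process_eventually_dyadic_eq[OF N that]
      by (rule tendsto_eventually[OF eventually_mono]) simp
  qed
  then have "(\<lambda>\<omega>. nat \<lfloor>real (N (S \<omega>) \<omega>)\<rfloor>) \<in> measurable M (count_space UNIV)"
    by measurable
  then show ?thesis by simp
qed

lemma indep_set_vimage_compose:
  assumes indep: "indep_set {X -` A \<inter> space M | A. A \<in> sets MX} B"
    and X: "X \<in> measurable M MX" and f: "f \<in> measurable MX MZ"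
  shows "indep_set {(\<lambda>\<omega>. f (X \<omega>)) -` A \<inter> space M | A. A \<in> sets MZ} B"
proof -
  have "(\<lambda>\<omega>. f (X \<omega>)) -` A \<inter> space M \<in> {X -` A \<inter> space M | A. A \<in> sets MX}"
    if "A \<in> sets MZ" for A
  proof -
    have "(\<lambda>\<omega>. f (X \<omega>)) -` A \<inter> space M = X -` (f -` A \<inter> space MX) \<inter> space M"
      using measurable_space[OF X] by auto
    moreover have "f -` A \<inter> space MX \<in> sets MX"
      using f that by (rule measurable_sets)
    ultimately show ?thesis by blast
  qed
  then show ?thesis
    using indep unfolding indep_set_def
    by (elim indep_sets_mono_sets) (auto split: bool.split)
qed

lemma pair_measure_distr_eq_distr_pair_if_indep_set:
  assumes X: "X \<in> measurable M MX" and Y: "Y \<in> measurable M MY"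
    and indep: "indep_set {X -` A \<inter> space M | A. A \<in> sets MX} {Y -` B \<inter> space M | B. B \<in> sets MY}"
  shows "distr M MX X \<Otimes>\<^sub>M distr M MY Y = distr M (MX \<Otimes>\<^sub>M MY) (\<lambda>\<omega>. (X \<omega>, Y \<omega>))"
proof (rule pair_measure_eqI)
  interpret X: prob_space "distr M MX X" using X by (rule prob_space_distr)
  interpret Y: prob_space "distr M MY Y" using Y by (rule prob_space_distr)
  show "sigma_finite_measure (distr M MX X)" "sigma_finite_measure (distr M MY Y)"
    by unfold_locales
  show "sets (distr M MX X \<Otimes>\<^sub>M distr M MY Y) = sets (distr M (MX \<Otimes>\<^sub>M MY) (\<lambda>\<omega>. (X \<omega>, Y \<omega>)))"
    by (metis sets_distr sets_pair_measure_cong)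
  fix A B assume A: "A \<in> sets (distr M MX X)" and B: "B \<in> sets (distr M MY Y)"
  have "(\<lambda>\<omega>. (X \<omega>, Y \<omega>)) -` (A \<times> B) \<inter> space M = (X -` A \<inter> space M) \<inter> (Y -` B \<inter> space M)"
    by auto
  moreover have "prob ((X -` A \<inter> space M) \<inter> (Y -` B \<inter> space M))
      = prob (X -` A \<inter> space M) * prob (Y -` B \<inter> space M)"
    using A B by (intro indep_setD[OF indep]) auto
  ultimately show "emeasure (distr M MX X) A * emeasure (distr M MY Y) B
      = emeasure (distr M (MX \<Otimes>\<^sub>M MY) (\<lambda>\<omega>. (X \<omega>, Y \<omega>))) (A \<times> B)"
    using A B X Y by (simp add: emeasure_distr emeasure_eq_measure ennreal_mult)
qed

lemma poisson_process_prob_at_independent_dyadic_time: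
  assumes N: "poisson_process M r N" and S: "S \<in> borel_measurable M"
    and indep: "indep_set {S -` A \<inter> space M | A. A \<in> sets borel}
      {(\<lambda>\<omega> t. N t \<omega>) -` B \<inter> space M | B. B \<in> sets (PiM UNIV (\<lambda>_. count_space UNIV))}"
  shows "prob {\<omega> \<in> space M. N (dyadic_ceiling n (S \<omega>)) \<omega> = k}
           = (\<integral>t. poisson_prob r (dyadic_ceiling n t) k \<partial>distr M borel S)"
proof -
  define P where "P = PiM UNIV (\<lambda>_::real. count_space (UNIV :: nat set))"
  define W where "W = (\<lambda>\<omega> t. N t \<omega>)"
  define D where "D = distr M borel S"
  define G where "G = (\<lambda>x. snd x (dyadic_ceiling n (fst x))) -` {k} \<inter> space (borel \<Otimes>\<^sub>M P)"
  have W: "W \<in> measurable M P"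
    using measurable_poisson_process_path[OF N] by (simp add: W_def P_def)
  have G: "G \<in> sets (borel \<Otimes>\<^sub>M P)"
    unfolding G_def P_def by (rule measurable_sets[OF measurable_eval_at_dyadic_ceiling]) simp
  have bounds: "0 \<le> poisson_prob r (dyadic_ceiling n t) k" "poisson_prob r (dyadic_ceiling n t) k \<le> 1" for t
    using poisson_prob_bounds[OF N dyadic_ceiling_nonneg] by auto
  interpret D: prob_space D
    unfolding D_def using S by (rule prob_space_distr)
  interpret W: prob_space "distr M P W"
    using W by (rule prob_space_distr)
  have slice: "emeasure (distr M P W) (Pair t -` G) = poisson_prob r (dyadic_ceiling n t) k" for t
  proof -
    have "W -` (Pair t -` G) \<inter> space M = {\<omega> \<in> space M. N (dyadic_ceiling n t) \<omega> = k}"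
      by (auto simp: G_def W_def P_def space_pair_measure space_PiM)
    then show ?thesis
      using sets_Pair1[OF G] W poisson_process_prob_eq[OF N dyadic_ceiling_nonneg]
      by (simp add: emeasure_distr emeasure_eq_measure)
  qed
  have "emeasure M {\<omega> \<in> space M. N (dyadic_ceiling n (S \<omega>)) \<omega> = k}
      = emeasure (distr M (borel \<Otimes>\<^sub>M P) (\<lambda>\<omega>. (S \<omega>, W \<omega>))) G"
  proof -
    have "{\<omega> \<in> space M. N (dyadic_ceiling n (S \<omega>)) \<omega> = k} = (\<lambda>\<omega>. (S \<omega>, W \<omega>)) -` G \<inter> space M"
      by (auto simp: G_def W_def P_def space_pair_measure space_PiM)
    then show ?thesis
      using G S W by (simp add: emeasure_distr)
  qed
  also have "\<dots> = emeasure (D \<Otimes>\<^sub>M distr M P W) G"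
    using pair_measure_distr_eq_distr_pair_if_indep_set[OF S W] indep by (simp add: D_def W_def P_def)
  also have "\<dots> = (\<integral>\<^sup>+ t. emeasure (distr M P W) (Pair t -` G) \<partial>D)"
    unfolding D_def by (rule W.emeasure_pair_measure_alt) (simp add: G)
  also have "\<dots> = (\<integral>\<^sup>+ t. poisson_prob r (dyadic_ceiling n t) k \<partial>D)"
    by (simp add: slice)
  also have "\<dots> = (\<integral>t. poisson_prob r (dyadic_ceiling n t) k \<partial>D)"
    by (intro nn_integral_eq_integral D.integrable_const_bound[where B=1])
       (auto simp: D_def bounds)
  finally show ?thesis
    using bounds by (simp add: emeasure_eq_measure D_def integral_nonneg_AE)
qed

lemma tendsto_prob_eq_if_eventually_eq:
  assumes X: "\<And>n. X n \<in> measurable M (count_space UNIV)" and Y: "Y \<in> measurable M (count_space UNIV)"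
    and eq: "\<And>\<omega>. \<omega> \<in> space M \<Longrightarrow> eventually (\<lambda>n. X n \<omega> = Y \<omega>) sequentially"
  shows "(\<lambda>n. prob {\<omega> \<in> space M. X n \<omega> = k}) \<longlonglongrightarrow> prob {\<omega> \<in> space M. Y \<omega> = k}"
proof -
  have sets: "{\<omega> \<in> space M. X n \<omega> = k} \<in> events" "{\<omega> \<in> space M. Y \<omega> = k} \<in> events" for n
    using X Y by measurable
  have "(\<lambda>n. \<integral>\<omega>. indicator {\<omega> \<in> space M. X n \<omega> = k} \<omega> \<partial>M) \<longlonglongrightarrow> (\<integral>\<omega>. indicator {\<omega> \<in> space M. Y \<omega> = k} \<omega> \<partial>M :: real)"
  proof (rule integral_dominated_convergence[where w="\<lambda>_. 1"])
    show "AE \<omega> in M. (\<lambda>n. indicator {\<omega> \<in> space M. X n \<omega> = k} \<omega>) \<longlonglongrightarrow> (indicator {\<omega> \<in> space M. Y \<omega> = k} \<omega> :: real)"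
    proof (rule AE_I2)
      fix \<omega> assume "\<omega> \<in> space M"
      then have "eventually (\<lambda>n. indicator {\<omega> \<in> space M. X n \<omega> = k} \<omega> = (indicator {\<omega> \<in> space M. Y \<omega> = k} \<omega> :: real)) sequentially"
        by (rule eventually_mono[OF eq]) (simp split: split_indicator)
      then show "(\<lambda>n. indicator {\<omega> \<in> space M. X n \<omega> = k} \<omega>) \<longlonglongrightarrow> (indicator {\<omega> \<in> space M. Y \<omega> = k} \<omega> :: real)"
        by (rule tendsto_eventually)
    qed
  qed (use sets in \<open>auto split: split_indicator\<close>)
  with sets show ?thesis by simp
qed

lemma poisson_process_prob_at_independent_time:
  assumes N: "poisson_process M r N" and S: "S \<in> borel_measurable M" and S_nonneg: "AE \<omega> in M. 0 \<le> S \<omega>"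
    and indep: "indep_set {S -` A \<inter> space M | A. A \<in> sets borel}
      {(\<lambda>\<omega> t. N t \<omega>) -` B \<inter> space M | B. B \<in> sets (PiM UNIV (\<lambda>_. count_space UNIV))}"
  shows "prob {\<omega> \<in> space M. N (S \<omega>) \<omega> = k} = (\<integral>t. poisson_prob r t k \<partial>distr M borel S)"
proof (rule LIMSEQ_unique)
  show "(\<lambda>n. prob {\<omega> \<in> space M. N (dyadic_ceiling n (S \<omega>)) \<omega> = k})
      \<longlonglongrightarrow> prob {\<omega> \<in> space M. N (S \<omega>) \<omega> = k}"
    using measurable_poisson_process_dyadic_time[OF N S] measurable_poisson_process_random_time[OF N S]
      poisson_process_eventually_dyadic_eq[OF N]
    by (rule tendsto_prob_eq_if_eventually_eq)
  interpret D: prob_space "distr M borel S"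
    using S by (rule prob_space_distr)
  have "(\<lambda>n. \<integral>t. poisson_prob r (dyadic_ceiling n t) k \<partial>distr M borel S)
      \<longlonglongrightarrow> (\<integral>t. poisson_prob r t k \<partial>distr M borel S)"
  proof (rule integral_dominated_convergence[where w="\<lambda>_. 1"])
    show "AE t in distr M borel S. norm (poisson_prob r (dyadic_ceiling n t) k) \<le> 1" for n
      using poisson_prob_bounds[OF N dyadic_ceiling_nonneg] by simp
    have "AE t in distr M borel S. 0 \<le> t"
      using S S_nonneg by (subst AE_distr_iff) auto
    then show "AE t in distr M borel S. (\<lambda>n. poisson_prob r (dyadic_ceiling n t) k) \<longlonglongrightarrow> poisson_prob r t k"
      by eventually_elim (rule isCont_tendsto_compose[OF isCont_poisson_prob LIMSEQ_dyadic_ceiling])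
  qed auto
  then show "(\<lambda>n. prob {\<omega> \<in> space M. N (dyadic_ceiling n (S \<omega>)) \<omega> = k})
      \<longlonglongrightarrow> (\<integral>t. poisson_prob r t k \<partial>distr M borel S)"
    by (simp add: poisson_process_prob_at_independent_dyadic_time[OF N S indep])
qed

lemma poisson_process_prob_at_independent_erlang_time:
  assumes N: "poisson_process M b N" and "0 < a" "0 < b"
    and S: "distributed M lborel S (erlang_density m a)"
    and indep: "indep_set {S -` A \<inter> space M | A. A \<in> sets borel}
      {(\<lambda>\<omega> t. N t \<omega>) -` B \<inter> space M | B. B \<in> sets (PiM UNIV (\<lambda>_. count_space UNIV))}"
  shows "prob {\<omega> \<in> space M. N (S \<omega>) \<omega> = k}
           = real ((k + m) choose k) * (a / (a + b)) ^ Suc m * (b / (a + b)) ^ k"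
proof -
  have S_meas: "S \<in> borel_measurable M"
    using distributed_measurable[OF S] by simp
  have "AE \<omega> in M. 0 \<le> S \<omega>"
    using S by (subst distributed_AE2[OF S]) (auto simp: erlang_density_def)
  then have "prob {\<omega> \<in> space M. N (S \<omega>) \<omega> = k} = (\<integral>t. poisson_prob b t k \<partial>distr M borel S)"
    by (rule poisson_process_prob_at_independent_time[OF N S_meas _ indep])
  also have "\<dots> = expectation (\<lambda>\<omega>. poisson_prob b (S \<omega>) k)"
    using S_meas by (simp add: integral_distr)
  also have "\<dots> = (LINT t|lborel. erlang_density m a t * poisson_prob b t k)"
    using distributed_integral[OF S, of "\<lambda>t. poisson_prob b t k"] assms(2) by simp
  also have "\<dots> = real ((k + m) choose k) * (a / (a + b)) ^ Suc m * (b / (a + b)) ^ k"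
    using assms(2,3) by (rule integral_erlang_density_mult_poisson_prob)
  finally show ?thesis .
qed

lemma attack_prob_eq_sum:
  assumes "(\<lambda>\<omega>. N (\<Sum>i<z. T i \<omega>) \<omega>) \<in> measurable M (count_space UNIV)"
  shows "attack_prob M T N p q z
      = 1 - (\<Sum>k<z. prob {\<omega> \<in> space M. N (\<Sum>i<z. T i \<omega>) \<omega> = k})
          + (\<Sum>k<z. prob {\<omega> \<in> space M. N (\<Sum>i<z. T i \<omega>) \<omega> = k} * (q / p) ^ (z - k))"
proof -
  define E where "E k = {\<omega> \<in> space M. N (\<Sum>i<z. T i \<omega>) \<omega> = k}" for k
  have E: "E k \<in> events" for k
    unfolding E_def using assms by measurable
  have "{\<omega> \<in> space M. z \<le> N (\<Sum>i<z. T i \<omega>) \<omega>} = space M - (\<Union>k<z. E k)"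
    by (auto simp: E_def)
  moreover have "prob (\<Union>k<z. E k) = (\<Sum>k<z. prob (E k))"
    using E by (intro finite_measure_finite_Union) (auto simp: disjoint_family_on_def E_def)
  ultimately show ?thesis
    using E by (simp add: attack_prob_def prob_compl E_def[symmetric])
qed

lemma attack_prob_eq_if_negative_binomial:
  assumes "(\<lambda>\<omega>. N (\<Sum>i<z. T i \<omega>) \<omega>) \<in> measurable M (count_space UNIV)" and "p \<noteq> 0"
    and negative_binomial: "\<And>k. prob {\<omega> \<in> space M. N (\<Sum>i<z. T i \<omega>) \<omega> = k}
                                = real ((k + z - 1) choose k) * p ^ z * q ^ k"
  shows "attack_prob M T N p q z
           = 1 - (\<Sum>k<z. (p ^ z * q ^ k - q ^ z * p ^ k) * real ((k + z - 1) choose k))"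
proof -
  have ratio: "c * p ^ z * q ^ k * (q / p) ^ (z - k) = c * q ^ z * p ^ k" if "k < z" for c k
    using that \<open>p \<noteq> 0\<close> power_add[of q k "z - k"] power_add[of p k "z - k"]
    by (simp add: power_divide field_simps)
  have "attack_prob M T N p q z = 1 - (\<Sum>k<z. real ((k + z - 1) choose k) * p ^ z * q ^ k)
      + (\<Sum>k<z. real ((k + z - 1) choose k) * p ^ z * q ^ k * (q / p) ^ (z - k))"
    using attack_prob_eq_sum[where N = N and z = z and T = T, OF assms(1)]
    by (simp add: negative_binomial)
  also have "\<dots> = 1 - (\<Sum>k<z. real ((k + z - 1) choose k) * p ^ z * q ^ k)
      + (\<Sum>k<z. real ((k + z - 1) choose k) * q ^ z * p ^ k)"
    by (intro arg_cong[where f = "\<lambda>b. _ + b"] sum.cong refl ratio) simp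
  also have "\<dots> = 1 - (\<Sum>k<z. (p ^ z * q ^ k - q ^ z * p ^ k) * real ((k + z - 1) choose k))"
    by (simp add: sum_subtractf left_diff_distrib right_diff_distrib mult_ac)
  finally show ?thesis .
qed

end

theorem mainTheorem3:
  fixes M :: "'a measure" and T :: "nat \<Rightarrow> 'a \<Rightarrow> real" and N :: "real \<Rightarrow> 'a \<Rightarrow> nat"
    and \<alpha> \<alpha>' p q :: real and z :: nat
  assumes "prob_space M"
    and "0 < \<alpha>" and "0 < \<alpha>'"
    and "0 < q" and "q < 1/2" and "p = 1 - q"
    and "p = \<alpha> / (\<alpha> + \<alpha>')" and "q = \<alpha>' / (\<alpha> + \<alpha>')"
    and "prob_space.indep_vars M (\<lambda>_. borel) T UNIV"
    and "\<And>i. distributed M lborel (T i) (exponential_density \<alpha>)"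
    and "poisson_process M \<alpha>' N"
    and "prob_space.indep_set M
           {(\<lambda>\<omega> (i::nat). T i \<omega>) -` A \<inter> space M | A. A \<in> sets (PiM UNIV (\<lambda>_. borel))}
           {(\<lambda>\<omega> (t::real). N t \<omega>) -` B \<inter> space M | B.
              B \<in> sets (PiM UNIV (\<lambda>_. count_space (UNIV :: nat set)))}"
    and "1 \<le> z"
  shows "attack_prob M T N p q z
           = 1 - (\<Sum>k<z. (p ^ z * q ^ k - q ^ z * p ^ k) * real ((k + z - 1) choose k))"
proof -
  interpret prob_space M by fact
  obtain m where z: "z = Suc m"
    using \<open>1 \<le> z\<close> by (cases z) auto
  define S where "S = (\<lambda>\<omega>. \<Sum>i<z. T i \<omega>)"
  have T_meas: "T i \<in> borel_measurable M" for i
    using distributed_measurable[OF assms(10)] by simp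
  have S_erlang: "distributed M lborel S (erlang_density m \<alpha>)"
    using exponential_distributed_sum[of "{..<z}" \<alpha> T] assms(2,10) indep_vars_subset[OF assms(9)]
    unfolding S_def by (simp add: z lessThan_empty_iff)
  have S_indep: "indep_set {S -` A \<inter> space M | A. A \<in> sets borel}
      {(\<lambda>\<omega> t. N t \<omega>) -` B \<inter> space M | B. B \<in> sets (PiM UNIV (\<lambda>_. count_space UNIV))}"
    using indep_set_vimage_compose[OF assms(12), of "\<lambda>x. \<Sum>i<z. x i" borel] T_meas
    unfolding S_def by (simp add: measurable_PiM_single')
  have "prob {\<omega> \<in> space M. N (S \<omega>) \<omega> = k} = real ((k + z - 1) choose k) * p ^ z * q ^ k" for k
    using poisson_process_prob_at_independent_erlang_time[OF assms(11,2,3) S_erlang S_indep]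
    by (simp add: assms(7,8) z)
  moreover have "p \<noteq> 0"
    using assms(4-6) by simp
  ultimately show ?thesis
    using measurable_poisson_process_random_time[OF assms(11)] T_meas
    by (intro attack_prob_eq_if_negative_binomial) (simp_all add: S_def)
qed

end
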